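(* Let $t\in[n]$ and let $S\subseteq N$ be $t$-switchable. Then the ideals $\tilde{\mathcal{I}}^{\langle t\rangle}_S$ and $P^{\langle t\rangle}_S$ of $R$ are prime.
   Context: Fix positive integers $n, r_1,\dots,r_n$, let $N=[r_1]\times\cdots\times[r_n]$, and let $R$ be the polynomial ring over a field in the variables $x_a$, $a\in N$. For $a,b\in N$ and $i\in[n]$, ${\rm s}(i,a,b)\in N$ has $i$-th component $b_i$ and other components equal to those of $a$. Let $d(a,b)=\#\{j: a_j\neq b_j\}$ and $f_{i,a,b}=x_ax_b-x_{{\rm s}(i,a,b)}x_{{\rm s}(i,b,a)}$. A subset $S\subseteq N$ is $t$-switchable if for all $a,b\in S$ with $d(a,b)=2$ and all $i\in[t]$, ${\rm s}(i,a,b)\in S$. Elements $a,b\in S$ are connected in $S$ if there are $a_0=a,\dots,a_k=b$ in $S$ with $d(a_{j-1},a_j)\le 1$ for all $j$. Set $\tilde{\mathcal{I}}^{\langle t\rangle}_S=(f_{i,a,b}: i\in[t],\ a,b \text{ connected in } S)$, $\mathrm{Var}^{\langle t\rangle}_S=(x_a: a\notin S)$, $P^{\langle t\rangle}_S=\mathrm{Var}^{\langle t\rangle}_S+\tilde{\mathcal{I}}^{\langle t\rangle}_S$. *)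

theory Defs
  imports "HOL-Algebra.Ideal" "HOL-Library.Poly_Mapping"
begin

text \<open>Points of N = [r_1] x ... x [r_n] are functions a :: nat => nat with
  a i in {1..r i} for i in {1..n} and a i = 0 otherwise.\<close>
definition gridN :: "nat \<Rightarrow> (nat \<Rightarrow> nat) \<Rightarrow> (nat \<Rightarrow> nat) set" where
  "gridN n r = {a. (\<forall>i\<in>{1..n}. a i \<in> {1..r i}) \<and> (\<forall>i. i \<notin> {1..n} \<longrightarrow> a i = 0)}"

type_synonym 'k mpoly = "((nat \<Rightarrow> nat) \<Rightarrow>\<^sub>0 nat) \<Rightarrow>\<^sub>0 'k"

definition polyN :: "nat \<Rightarrow> (nat \<Rightarrow> nat) \<Rightarrow> ('k::field) mpoly set" where
  "polyN n r = {p. \<forall>m\<in>Poly_Mapping.keys p. Poly_Mapping.keys m \<subseteq> gridN n r}"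

definition ringR :: "nat \<Rightarrow> (nat \<Rightarrow> nat) \<Rightarrow> ('k::field) mpoly ring" where
  "ringR n r = \<lparr>carrier = polyN n r, monoid.mult = (*), one = 1, zero = 0, add = (+)\<rparr>"

definition var :: "(nat \<Rightarrow> nat) \<Rightarrow> ('k::field) mpoly" where
  "var a = Poly_Mapping.single (Poly_Mapping.single a 1) 1"

definition sw :: "nat \<Rightarrow> (nat \<Rightarrow> nat) \<Rightarrow> (nat \<Rightarrow> nat) \<Rightarrow> (nat \<Rightarrow> nat)" where
  "sw i a b = a(i := b i)"

definition hdist :: "(nat \<Rightarrow> nat) \<Rightarrow> (nat \<Rightarrow> nat) \<Rightarrow> nat" where
  "hdist a b = card {j. a j \<noteq> b j}"

definition fbin :: "nat \<Rightarrow> (nat \<Rightarrow> nat) \<Rightarrow> (nat \<Rightarrow> nat) \<Rightarrow> ('k::field) mpoly" where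
  "fbin i a b = var a * var b - var (sw i a b) * var (sw i b a)"

definition switchable :: "nat \<Rightarrow> (nat \<Rightarrow> nat) set \<Rightarrow> bool" where
  "switchable t S \<longleftrightarrow> (\<forall>a\<in>S. \<forall>b\<in>S. hdist a b = 2 \<longrightarrow> (\<forall>i\<in>{1..t}. sw i a b \<in> S))"

definition connected_in :: "(nat \<Rightarrow> nat) set \<Rightarrow> (nat \<Rightarrow> nat) \<Rightarrow> (nat \<Rightarrow> nat) \<Rightarrow> bool" where
  "connected_in S a b \<longleftrightarrow> a \<in> S \<and> b \<in> S \<and>
     (a, b) \<in> {(x, y). x \<in> S \<and> y \<in> S \<and> hdist x y \<le> 1}\<^sup>*"

definition Itilde :: "nat \<Rightarrow> (nat \<Rightarrow> nat) \<Rightarrow> nat \<Rightarrow> (nat \<Rightarrow> nat) set \<Rightarrow> ('k::field) mpoly set" where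
  "Itilde n r t S = genideal (ringR n r)
     {fbin i a b | i a b. i \<in> {1..t} \<and> connected_in S a b}"

definition VarS :: "nat \<Rightarrow> (nat \<Rightarrow> nat) \<Rightarrow> (nat \<Rightarrow> nat) set \<Rightarrow> ('k::field) mpoly set" where
  "VarS n r S = genideal (ringR n r) {var a | a. a \<in> gridN n r \<and> a \<notin> S}"

definition PS :: "nat \<Rightarrow> (nat \<Rightarrow> nat) \<Rightarrow> nat \<Rightarrow> (nat \<Rightarrow> nat) set \<Rightarrow> ('k::field) mpoly set" where
  "PS n r t S = set_add (ringR n r) (VarS n r S) (Itilde n r t S)"

end

theory Submission
  imports Defs "HOL-Library.List_Lexorder"
begin

text \<open>Both ideals are kernels of monomial maps into a polynomial ring, hence prime. The map sends
  \<open>x\<^sub>a\<close> for \<open>a \<notin> S\<close> to a variable of its own, and \<open>x\<^sub>a\<close> for \<open>a \<in> S\<close> to the product of a variable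
  recording the connected component \<open>C\<close> of \<open>a\<close> together with the coordinates \<open>a j\<close> for \<open>j > t\<close>, and
  of variables recording \<open>(j, a j, C)\<close> for \<open>j \<le> t\<close>. Switching a coordinate \<open>i \<le> t\<close> between connected
  points stays in \<open>S\<close> and in \<open>C\<close>, so the binomials \<open>fbin i a b\<close> lie in the kernel. Conversely,
  monomials with the same image are joined by such switches: a variable \<open>x\<^sub>b\<close> of one of them can be
  produced in the other by correcting, one coordinate \<open>i \<le> t\<close> at a time, a point in the component
  of \<open>b\<close>; then \<open>x\<^sub>b\<close> is cancelled and one inducts on the degree. So the kernel is spanned by binomials
  and equals \<open>Itilde\<close>. Twisting the map by the character killing every monomial divisible by some
  \<open>x\<^sub>a\<close> with \<open>a \<notin> S\<close> gives \<open>PS\<close> in the same way.\<close>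

lemma keys_add_nat:
  "Poly_Mapping.keys (m + m' :: 'a \<Rightarrow>\<^sub>0 nat) = Poly_Mapping.keys m \<union> Poly_Mapping.keys m'"
  by (auto simp: in_keys_iff lookup_add)

lemma keys_diff_nat_subset: "Poly_Mapping.keys (m - m' :: 'a \<Rightarrow>\<^sub>0 nat) \<subseteq> Poly_Mapping.keys m"
  by (auto simp: in_keys_iff lookup_minus)

lemma single_split_nat:
  assumes "0 < Poly_Mapping.lookup m b"
  shows "m = (m - Poly_Mapping.single b 1) + Poly_Mapping.single b (1::nat)"
proof (rule poly_mapping_eqI)
  fix k
  show "Poly_Mapping.lookup m k =
      Poly_Mapping.lookup (m - Poly_Mapping.single b 1 + Poly_Mapping.single b 1) k"
    using assms by (cases "k = b") (auto simp: lookup_add lookup_minus lookup_single)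
qed

lemma double_split_nat:
  assumes "0 < Poly_Mapping.lookup m a" "0 < Poly_Mapping.lookup m c" "a \<noteq> c"
  shows "m = (m - Poly_Mapping.single a 1 - Poly_Mapping.single c 1)
    + Poly_Mapping.single a 1 + Poly_Mapping.single c (1::nat)"
proof (rule poly_mapping_eqI)
  fix k
  show "Poly_Mapping.lookup m k = Poly_Mapping.lookup (m - Poly_Mapping.single a 1
      - Poly_Mapping.single c 1 + Poly_Mapping.single a 1 + Poly_Mapping.single c 1) k"
    using assms by (cases "k = a"; cases "k = c") (auto simp: lookup_add lookup_minus lookup_single)
qed

lemma sum_pos_iff_nat: "finite A \<Longrightarrow> 0 < sum f A \<longleftrightarrow> (\<exists>x\<in>A. 0 < (f x :: nat))"
  by (metis neq0_conv sum_eq_0_iff)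

lemma lookup_map_mult:
  "Poly_Mapping.lookup (Poly_Mapping.map ((*) (c::nat)) p) v = c * Poly_Mapping.lookup p v"
  by (auto simp: map.rep_eq when_def)

lemma polyN_single:
  "Poly_Mapping.keys m \<subseteq> gridN n r \<Longrightarrow> (Poly_Mapping.single m c :: 'k::field mpoly) \<in> polyN n r"
  by (auto simp: polyN_def)

lemma polyN_zero: "0 \<in> polyN n r"
  by (simp add: polyN_def)

lemma polyN_one: "1 \<in> polyN n r"
  by (simp add: polyN_def)

lemma polyN_add:
  assumes "p \<in> polyN n r" "q \<in> polyN n r"
  shows "p + q \<in> polyN n r"
  using assms keys_add[of p q] unfolding polyN_def by blast

lemma polyN_uminus: "p \<in> polyN n r \<Longrightarrow> - p \<in> polyN n r"
  unfolding polyN_def by (simp add: keys_minus)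

lemma polyN_diff: "p \<in> polyN n r \<Longrightarrow> q \<in> polyN n r \<Longrightarrow> p - q \<in> polyN n r"
  unfolding diff_conv_add_uminus by (intro polyN_add polyN_uminus)

lemma polyN_mult:
  assumes "p \<in> polyN n r" "q \<in> polyN n r"
  shows "p * q \<in> polyN n r"
  unfolding polyN_def
proof (intro CollectI ballI)
  fix m assume "m \<in> Poly_Mapping.keys (p * q)"
  then obtain a b where "a \<in> Poly_Mapping.keys p" "b \<in> Poly_Mapping.keys q" "m = a + b"
    using keys_mult[of p q] by blast
  then show "Poly_Mapping.keys m \<subseteq> gridN n r"
    using assms by (auto simp: polyN_def keys_add_nat)
qed

lemma cring_ringR: "cring (ringR n r :: 'k::field mpoly ring)"
proof (rule cringI)
  show "abelian_group (ringR n r :: 'k mpoly ring)"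
  proof (rule abelian_groupI)
    fix x assume "x \<in> carrier (ringR n r :: 'k mpoly ring)"
    then show "\<exists>y\<in>carrier (ringR n r). y \<oplus>\<^bsub>ringR n r\<^esub> x = \<zero>\<^bsub>ringR n r\<^esub>"
      by (intro bexI[of _ "- x"]) (simp_all add: ringR_def polyN_uminus)
  qed (simp_all add: ringR_def polyN_add polyN_zero add.assoc add.commute)
  show "comm_monoid (ringR n r :: 'k mpoly ring)"
    by (rule comm_monoidI) (simp_all add: ringR_def polyN_mult polyN_one mult.assoc mult.commute)
qed (simp add: ringR_def distrib_right)

context
  fixes n :: nat and r :: "nat \<Rightarrow> nat"
begin

lemma ringR_simps:
  "carrier (ringR n r :: 'k::field mpoly ring) = polyN n r"
  "x \<oplus>\<^bsub>ringR n r\<^esub> y = x + y" "x \<otimes>\<^bsub>ringR n r\<^esub> y = x * y"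
  "\<zero>\<^bsub>ringR n r\<^esub> = 0" "\<one>\<^bsub>ringR n r\<^esub> = 1"
  by (simp_all add: ringR_def)

lemma ringR_a_inv: "x \<in> polyN n r \<Longrightarrow> \<ominus>\<^bsub>(ringR n r :: 'k::field mpoly ring)\<^esub> x = - x"
proof -
  assume x: "x \<in> polyN n r"
  interpret cring "ringR n r :: 'k mpoly ring" by (rule cring_ringR)
  show ?thesis using x by (intro minus_equality) (simp_all add: ringR_simps polyN_uminus)
qed

lemma ideal_subset_polyN: "ideal I (ringR n r :: 'k::field mpoly ring) \<Longrightarrow> I \<subseteq> polyN n r"
  using ideal.Icarr by (fastforce simp: ringR_simps)

lemma ideal_zero: "ideal I (ringR n r :: 'k::field mpoly ring) \<Longrightarrow> 0 \<in> I"
  using additive_subgroup.zero_closed[OF ideal.axioms(1)] by (fastforce simp: ringR_simps)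

lemma ideal_add:
  "ideal I (ringR n r :: 'k::field mpoly ring) \<Longrightarrow> x \<in> I \<Longrightarrow> y \<in> I \<Longrightarrow> x + y \<in> I"
  using additive_subgroup.a_closed[OF ideal.axioms(1)] by (fastforce simp: ringR_simps)

lemma ideal_mult_left:
  "ideal I (ringR n r :: 'k::field mpoly ring) \<Longrightarrow> x \<in> polyN n r \<Longrightarrow> y \<in> I \<Longrightarrow> x * y \<in> I"
  using ideal.I_l_closed by (fastforce simp: ringR_simps)

lemma genideal_ringR:
  assumes "H \<subseteq> polyN n r"
  shows "ideal (genideal (ringR n r) H :: 'k::field mpoly set) (ringR n r)"
    and "H \<subseteq> genideal (ringR n r) H"
    and "ideal I (ringR n r) \<Longrightarrow> H \<subseteq> I \<Longrightarrow> genideal (ringR n r) H \<subseteq> I"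
proof -
  interpret cring "ringR n r :: 'k mpoly ring" by (rule cring_ringR)
  show "ideal (genideal (ringR n r) H) (ringR n r)" "H \<subseteq> genideal (ringR n r) H"
    using assms by (simp_all add: genideal_ideal genideal_self ringR_simps)
  show "ideal I (ringR n r) \<Longrightarrow> H \<subseteq> I \<Longrightarrow> genideal (ringR n r) H \<subseteq> I"
    by (rule genideal_minimal)
qed

lemma kernel_primeideal:
  fixes \<phi> :: "'k::field mpoly \<Rightarrow> 'b::idom"
  assumes add: "\<And>p q. \<phi> (p + q) = \<phi> p + \<phi> q"
    and mult: "\<And>p q. \<phi> (p * q) = \<phi> p * \<phi> q"
    and one: "\<phi> 1 \<noteq> 0"
  shows "primeideal {p \<in> polyN n r. \<phi> p = 0} (ringR n r)"
proof -
  interpret cring "ringR n r :: 'k mpoly ring" by (rule cring_ringR)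
  let ?K = "{p \<in> polyN n r. \<phi> p = 0}"
  have zero: "\<phi> 0 = 0"
    using add[of 0 0] by (metis add_0 add_cancel_right_right)
  have uminus: "\<phi> (- p) = - \<phi> p" for p
    using add[of p "- p"] zero by (simp add: eq_neg_iff_add_eq_0 add.commute)
  have "subgroup ?K (add_monoid (ringR n r))"
  proof (rule subgroup.intro)
    fix x assume "x \<in> ?K"
    then show "inv\<^bsub>add_monoid (ringR n r)\<^esub> x \<in> ?K"
      using ringR_a_inv[of x] by (simp add: a_inv_def polyN_uminus uminus)
  qed (auto simp: ringR_def polyN_add polyN_zero add zero)
  then have "ideal ?K (ringR n r)"
    by (intro idealI ring_axioms) (auto simp: ringR_simps polyN_mult mult)
  then show ?thesis
    using one polyN_one by (intro primeidealI is_cring) (auto simp: ringR_simps mult)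
qed

end

section \<open>Monomial maps\<close>

definition monomial :: "('a \<Rightarrow>\<^sub>0 nat) \<Rightarrow> ('a \<Rightarrow>\<^sub>0 nat) \<Rightarrow>\<^sub>0 'k::field" where
  "monomial m = Poly_Mapping.single m 1"

lemma monomial_add: "monomial (m + m') = (monomial m * monomial m' :: _ \<Rightarrow>\<^sub>0 'k::field)"
  by (simp add: monomial_def mult_single)

lemma var_eq_monomial: "var a = monomial (Poly_Mapping.single a 1)"
  by (simp add: var_def monomial_def)

lemma monomial_polyN:
  "Poly_Mapping.keys m \<subseteq> gridN n r \<Longrightarrow> (monomial m :: 'k::field mpoly) \<in> polyN n r"
  by (simp add: monomial_def polyN_single)

lemma var_polyN: "a \<in> gridN n r \<Longrightarrow> (var a :: 'k::field mpoly) \<in> polyN n r"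
  by (simp add: var_eq_monomial monomial_polyN)

definition monom_map :: "(('a \<Rightarrow>\<^sub>0 nat) \<Rightarrow> ('b \<Rightarrow>\<^sub>0 nat)) \<Rightarrow> (('a \<Rightarrow>\<^sub>0 nat) \<Rightarrow> 'k::comm_ring_1)
   \<Rightarrow> (('a \<Rightarrow>\<^sub>0 nat) \<Rightarrow>\<^sub>0 'k) \<Rightarrow> (('b \<Rightarrow>\<^sub>0 nat) \<Rightarrow>\<^sub>0 'k)" where
  "monom_map \<mu> \<chi> p =
     (\<Sum>m\<in>Poly_Mapping.keys p. Poly_Mapping.single (\<mu> m) (\<chi> m * Poly_Mapping.lookup p m))"

lemma monom_map_superset:
  "finite K \<Longrightarrow> Poly_Mapping.keys p \<subseteq> K \<Longrightarrow>
   monom_map \<mu> \<chi> p = (\<Sum>m\<in>K. Poly_Mapping.single (\<mu> m) (\<chi> m * Poly_Mapping.lookup p m))"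
  unfolding monom_map_def by (rule sum.mono_neutral_left) (auto simp: in_keys_iff)

lemma monom_map_add: "monom_map \<mu> \<chi> (p + q) = monom_map \<mu> \<chi> p + monom_map \<mu> \<chi> q"
proof -
  let ?K = "Poly_Mapping.keys p \<union> Poly_Mapping.keys q"
  have "monom_map \<mu> \<chi> (p + q) =
      (\<Sum>m\<in>?K. Poly_Mapping.single (\<mu> m) (\<chi> m * Poly_Mapping.lookup (p + q) m))"
    using keys_add[of p q] by (intro monom_map_superset) auto
  also have "\<dots> = monom_map \<mu> \<chi> p + monom_map \<mu> \<chi> q"
    by (subst (1 2) monom_map_superset[of ?K])
      (auto simp: lookup_add distrib_left single_add sum.distrib)
  finally show ?thesis .
qed

lemma monom_map_zero [simp]: "monom_map \<mu> \<chi> 0 = 0"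
  by (simp add: monom_map_def)

lemma monom_map_uminus: "monom_map \<mu> \<chi> (- p) = - monom_map \<mu> \<chi> p"
  using monom_map_add[of \<mu> \<chi> p "- p"] by (simp add: eq_neg_iff_add_eq_0 add.commute)

lemma monom_map_diff: "monom_map \<mu> \<chi> (p - q) = monom_map \<mu> \<chi> p - monom_map \<mu> \<chi> q"
  unfolding diff_conv_add_uminus monom_map_add monom_map_uminus ..

lemma monom_map_sum: "monom_map \<mu> \<chi> (sum f A) = (\<Sum>x\<in>A. monom_map \<mu> \<chi> (f x))"
  by (induction A rule: infinite_finite_induct) (simp_all add: monom_map_add)

lemma monom_map_single:
  "monom_map \<mu> \<chi> (Poly_Mapping.single m c) = Poly_Mapping.single (\<mu> m) (\<chi> m * c)"
  by (subst monom_map_superset[of "{m}"]) auto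

lemma monom_map_monomial: "monom_map \<mu> \<chi> (monomial m) = Poly_Mapping.single (\<mu> m) (\<chi> m)"
  by (simp add: monomial_def monom_map_single)

lemma sum_singles_lookup:
  "p = (\<Sum>m\<in>Poly_Mapping.keys p. Poly_Mapping.single m (Poly_Mapping.lookup p m))"
  by (rule poly_mapping_eqI) (simp add: lookup_sum lookup_single when_def in_keys_iff sum.delta)

lemma monom_map_mult:
  assumes \<mu>: "\<And>m m'. \<mu> (m + m') = \<mu> m + \<mu> m'" and \<chi>: "\<And>m m'. \<chi> (m + m') = \<chi> m * \<chi> m'"
  shows "monom_map \<mu> \<chi> (p * q) = monom_map \<mu> \<chi> p * monom_map \<mu> \<chi> q"
proof -
  let ?P = "Poly_Mapping.keys p" and ?Q = "Poly_Mapping.keys q"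
  have "p * q = (\<Sum>a\<in>?P. \<Sum>b\<in>?Q.
      Poly_Mapping.single (a + b) (Poly_Mapping.lookup p a * Poly_Mapping.lookup q b))"
    by (subst (1) sum_singles_lookup, subst (2) sum_singles_lookup)
      (simp add: sum_product mult_single)
  then have "monom_map \<mu> \<chi> (p * q) = (\<Sum>a\<in>?P. \<Sum>b\<in>?Q. Poly_Mapping.single (\<mu> a + \<mu> b)
      (\<chi> a * \<chi> b * (Poly_Mapping.lookup p a * Poly_Mapping.lookup q b)))"
    by (simp add: monom_map_sum monom_map_single \<mu> \<chi>)
  also have "\<dots> = monom_map \<mu> \<chi> p * monom_map \<mu> \<chi> q"
    by (simp add: monom_map_def sum_product mult_single ac_simps)
  finally show ?thesis .
qed

lemma card_keys_diff_less:
  assumes "m \<in> Poly_Mapping.keys p" "Poly_Mapping.keys d \<subseteq> Poly_Mapping.keys p"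
    and "Poly_Mapping.lookup d m = Poly_Mapping.lookup p m"
  shows "card (Poly_Mapping.keys (p - d)) < card (Poly_Mapping.keys p)"
proof (rule psubset_card_mono[OF finite_keys])
  have "Poly_Mapping.keys (p - d) \<subseteq> Poly_Mapping.keys p"
    using assms(2) keys_diff[of p d] by blast
  moreover have "m \<notin> Poly_Mapping.keys (p - d)"
    using assms(3) by (simp add: in_keys_iff lookup_minus)
  ultimately show "Poly_Mapping.keys (p - d) \<subset> Poly_Mapping.keys p"
    using assms(1) by blast
qed

lemma monom_map_kernel_collision:
  fixes \<chi> :: "('a \<Rightarrow>\<^sub>0 nat) \<Rightarrow> 'k::field"
  assumes \<chi>01: "\<And>m. \<chi> m = 0 \<or> \<chi> m = 1"
    and p: "monom_map \<mu> \<chi> p = 0" and m: "m \<in> Poly_Mapping.keys p" "\<chi> m = 1"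
  obtains m' where "m' \<in> Poly_Mapping.keys p" "m' \<noteq> m" "\<mu> m' = \<mu> m" "\<chi> m' = 1"
proof (rule ccontr)
  assume "\<not> thesis"
  then have other: "\<mu> m' = \<mu> m \<Longrightarrow> m' \<in> Poly_Mapping.keys p \<Longrightarrow> m' \<noteq> m \<Longrightarrow> \<chi> m' = 0" for m'
    using that \<chi>01 by blast
  have "Poly_Mapping.lookup (monom_map \<mu> \<chi> p) (\<mu> m) = (\<Sum>m'\<in>Poly_Mapping.keys p.
      if m' = m then Poly_Mapping.lookup p m' else 0)"
    unfolding monom_map_def lookup_sum lookup_single
    by (intro sum.cong) (auto simp: when_def m(2) dest: other)
  also have "\<dots> = Poly_Mapping.lookup p m"
    using m(1) by simp
  finally show False
    using p m(1) by (simp add: in_keys_iff)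
qed

lemma monom_map_kernel_reduction:
  fixes \<chi> :: "((nat \<Rightarrow> nat) \<Rightarrow>\<^sub>0 nat) \<Rightarrow> 'k::field"
  assumes I: "ideal I (ringR n r)"
    and \<chi>01: "\<And>m. \<chi> m = 0 \<or> \<chi> m = 1"
    and killed: "\<And>m. Poly_Mapping.keys m \<subseteq> gridN n r \<Longrightarrow> \<chi> m = 0 \<Longrightarrow> monomial m \<in> I"
    and binomial: "\<And>m m'. Poly_Mapping.keys m \<subseteq> gridN n r \<Longrightarrow> Poly_Mapping.keys m' \<subseteq> gridN n r \<Longrightarrow>
       \<chi> m = 1 \<Longrightarrow> \<chi> m' = 1 \<Longrightarrow> \<mu> m = \<mu> m' \<Longrightarrow> monomial m - monomial m' \<in> I"
    and p: "p \<in> polyN n r" "monom_map \<mu> \<chi> p = 0" and m: "m \<in> Poly_Mapping.keys p"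
  obtains d where "d \<in> I" "monom_map \<mu> \<chi> d = 0" "Poly_Mapping.keys d \<subseteq> Poly_Mapping.keys p"
    "Poly_Mapping.lookup d m = Poly_Mapping.lookup p m"
proof -
  let ?c = "Poly_Mapping.lookup p m"
  have grid: "Poly_Mapping.keys m' \<subseteq> gridN n r" if "m' \<in> Poly_Mapping.keys p" for m'
    using p(1) that by (auto simp: polyN_def)
  have scalar: "Poly_Mapping.single 0 ?c \<in> polyN n r"
    by (simp add: polyN_single)
  show thesis
  proof (cases "\<chi> m = 0")
    case True
    have "Poly_Mapping.single m ?c = Poly_Mapping.single 0 ?c * monomial m"
      by (simp add: monomial_def mult_single)
    then have "Poly_Mapping.single m ?c \<in> I"
      using ideal_mult_left[OF I scalar killed[OF grid[OF m] True]] by simp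
    then show thesis
      using True m by (intro that[of "Poly_Mapping.single m ?c"]) (simp_all add: monom_map_single)
  next
    case False
    then have "\<chi> m = 1"
      using \<chi>01 by blast
    then obtain m' where m': "m' \<in> Poly_Mapping.keys p" "m' \<noteq> m" "\<mu> m' = \<mu> m" "\<chi> m' = 1"
      using monom_map_kernel_collision[OF \<chi>01 p(2) m] by blast
    let ?d = "Poly_Mapping.single m ?c - Poly_Mapping.single m' ?c"
    have "?d = Poly_Mapping.single 0 ?c * (monomial m - monomial m')"
      by (simp add: monomial_def mult_single algebra_simps)
    moreover have "monomial m - monomial m' \<in> I"
      using binomial[OF grid[OF m] grid[OF m'(1)]] m' \<open>\<chi> m = 1\<close> by simp
    ultimately have "?d \<in> I"
      using ideal_mult_left[OF I scalar] by simp
    moreover have "Poly_Mapping.keys ?d \<subseteq> Poly_Mapping.keys p"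
      using m m'(1) keys_diff[of "Poly_Mapping.single m ?c" "Poly_Mapping.single m' ?c"]
      by (auto split: if_splits)
    ultimately show thesis
      using m' \<open>\<chi> m = 1\<close> by (intro that[of ?d])
        (simp_all add: monom_map_diff monom_map_single lookup_minus lookup_single)
  qed
qed

lemma monom_map_kernel_subset:
  fixes \<chi> :: "((nat \<Rightarrow> nat) \<Rightarrow>\<^sub>0 nat) \<Rightarrow> 'k::field"
  assumes I: "ideal I (ringR n r)"
    and \<chi>01: "\<And>m. \<chi> m = 0 \<or> \<chi> m = 1"
    and killed: "\<And>m. Poly_Mapping.keys m \<subseteq> gridN n r \<Longrightarrow> \<chi> m = 0 \<Longrightarrow> monomial m \<in> I"
    and binomial: "\<And>m m'. Poly_Mapping.keys m \<subseteq> gridN n r \<Longrightarrow> Poly_Mapping.keys m' \<subseteq> gridN n r \<Longrightarrow>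
       \<chi> m = 1 \<Longrightarrow> \<chi> m' = 1 \<Longrightarrow> \<mu> m = \<mu> m' \<Longrightarrow> monomial m - monomial m' \<in> I"
  shows "{p \<in> polyN n r. monom_map \<mu> \<chi> p = 0} \<subseteq> I"
proof -
  have "p \<in> I" if "p \<in> polyN n r" "monom_map \<mu> \<chi> p = 0" for p
    using that
  proof (induction "card (Poly_Mapping.keys p)" arbitrary: p rule: less_induct)
    case less
    show ?case
    proof (cases "p = 0")
      case True
      then show ?thesis using ideal_zero[OF I] by simp
    next
      case False
      then obtain m where m: "m \<in> Poly_Mapping.keys p" by fastforce
      obtain d where d: "d \<in> I" "monom_map \<mu> \<chi> d = 0" "Poly_Mapping.keys d \<subseteq> Poly_Mapping.keys p"
          "Poly_Mapping.lookup d m = Poly_Mapping.lookup p m"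
        by (rule monom_map_kernel_reduction[OF assms less.prems m])
      have "p - d \<in> polyN n r"
        using less.prems(1) ideal_subset_polyN[OF I] d(1) by (blast intro: polyN_diff)
      moreover have "monom_map \<mu> \<chi> (p - d) = 0"
        using less.prems(2) d(2) by (simp add: monom_map_diff)
      ultimately have "p - d \<in> I"
        using less.hyps card_keys_diff_less[OF m d(3,4)] by blast
      from ideal_add[OF I this d(1)] show ?thesis by simp
    qed
  qed
  then show ?thesis by blast
qed

lemma monom_map_kernel_primeideal:
  fixes \<mu> :: "((nat \<Rightarrow> nat) \<Rightarrow>\<^sub>0 nat) \<Rightarrow> ('b::linorder \<Rightarrow>\<^sub>0 nat)"
    and \<chi> :: "((nat \<Rightarrow> nat) \<Rightarrow>\<^sub>0 nat) \<Rightarrow> 'k::field"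
  assumes "\<And>m m'. \<mu> (m + m') = \<mu> m + \<mu> m'" and "\<And>m m'. \<chi> (m + m') = \<chi> m * \<chi> m'" and "\<chi> 0 \<noteq> 0"
  shows "primeideal {p \<in> polyN n r. monom_map \<mu> \<chi> p = 0} (ringR n r)"
proof (rule kernel_primeideal)
  show "monom_map \<mu> \<chi> 1 \<noteq> 0"
    using monom_map_single[of \<mu> \<chi> 0 1] assms(3) by (metis lookup_single_eq lookup_zero mult_1_right single_one)
qed (simp_all add: monom_map_add monom_map_mult assms(1,2))

definition avoiding :: "'a set \<Rightarrow> ('a \<Rightarrow>\<^sub>0 nat) \<Rightarrow> 'k::field" where
  "avoiding B m = (if \<forall>a\<in>B. Poly_Mapping.lookup m a = 0 then 1 else 0)"

lemma avoiding_add: "avoiding B (m + m') = (avoiding B m * avoiding B m' :: 'k::field)"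
  by (auto simp: avoiding_def lookup_add)

lemma avoiding_zero [simp]: "avoiding B 0 = 1"
  by (simp add: avoiding_def)

lemma avoiding_0_or_1: "avoiding B m = 0 \<or> avoiding B m = 1"
  by (simp add: avoiding_def)

lemma gridN_eqI:
  assumes "a \<in> gridN n r" "b \<in> gridN n r" "\<And>k. k \<in> {1..n} \<Longrightarrow> a k = b k"
  shows "a = b"
proof
  fix k
  show "a k = b k"
    using assms by (cases "k \<in> {1..n}") (auto simp: gridN_def)
qed

lemma gridN_outside: "a \<in> gridN n r \<Longrightarrow> k \<notin> {1..n} \<Longrightarrow> a k = 0"
  by (simp add: gridN_def)

definition coords :: "nat \<Rightarrow> (nat \<Rightarrow> nat) \<Rightarrow> nat list" where
  "coords n a = map a [1..<Suc n]"

lemma coords_inj: "a \<in> gridN n r \<Longrightarrow> b \<in> gridN n r \<Longrightarrow> coords n a = coords n b \<Longrightarrow> a = b"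
  by (rule gridN_eqI) (auto simp: coords_def)

lemma finite_gridN: "finite (gridN n r)"
proof -
  let ?M = "Max (r ` {1..n})"
  have "set (coords n a) \<subseteq> {0..?M}" if a: "a \<in> gridN n r" for a
  proof
    fix x assume "x \<in> set (coords n a)"
    then obtain k where k: "k \<in> {1..n}" "x = a k"
      by (auto simp: coords_def less_Suc_eq_le simp del: upt_Suc)
    then have "x \<le> r k" using a by (auto simp: gridN_def)
    also have "r k \<le> ?M" using k by (intro Max_ge) auto
    finally show "x \<in> {0..?M}" by simp
  qed
  moreover have "length (coords n a) = n" for a
    by (simp add: coords_def)
  ultimately have sub: "coords n ` gridN n r \<subseteq> {xs. set xs \<subseteq> {0..?M} \<and> length xs = n}"
    by blast
  have fin: "finite {xs. set xs \<subseteq> {0..?M} \<and> length xs = n}"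
    by (rule finite_lists_length_eq) simp
  have "inj_on (coords n) (gridN n r)"
    by (rule inj_onI) (rule coords_inj)
  then show ?thesis
    by (rule finite_imageD[OF finite_subset[OF sub fin]])
qed

lemma sw_gridN:
  "a \<in> gridN n r \<Longrightarrow> b \<in> gridN n r \<Longrightarrow> i \<in> {1..n} \<Longrightarrow> sw i a b \<in> gridN n r"
  unfolding sw_def gridN_def by auto

lemma hdist_sym: "hdist a b = hdist b a"
proof -
  have "{j. a j \<noteq> b j} = {j. b j \<noteq> a j}" by auto
  then show ?thesis by (simp add: hdist_def)
qed

lemma hdist_upd_le: "hdist a (a(i := v)) \<le> 1"
proof -
  have "card {j. a j \<noteq> (a(i := v)) j} \<le> card {i}"
    by (intro card_mono) auto
  then show ?thesis by (simp add: hdist_def)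
qed

lemma hdist_le_1E:
  assumes "a \<in> gridN n r" "b \<in> gridN n r" "hdist a b \<le> 1"
  obtains j where "\<And>k. k \<noteq> j \<Longrightarrow> a k = b k"
proof -
  have "{j. a j \<noteq> b j} \<subseteq> {1..n}"
  proof
    fix j assume "j \<in> {j. a j \<noteq> b j}"
    then show "j \<in> {1..n}"
      using assms(1,2) unfolding gridN_def by (cases "j \<in> {1..n}") auto
  qed
  then have "finite {j. a j \<noteq> b j}"
    by (rule finite_subset) simp
  moreover have "card {j. a j \<noteq> b j} = 0 \<or> card {j. a j \<noteq> b j} = 1"
    using assms(3) by (auto simp: hdist_def)
  ultimately have "{j. a j \<noteq> b j} = {} \<or> (\<exists>j. {j. a j \<noteq> b j} = {j})"
    by (metis card_0_eq card_1_singletonE)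
  then show ?thesis
    using that by blast
qed

section \<open>Connectivity in switchable sets\<close>

lemma connected_in_step: "a \<in> S \<Longrightarrow> b \<in> S \<Longrightarrow> hdist a b \<le> 1 \<Longrightarrow> connected_in S a b"
  unfolding connected_in_def by auto

lemma connected_in_refl: "a \<in> S \<Longrightarrow> connected_in S a a"
  by (simp add: connected_in_def)

lemma connected_in_sym: "connected_in S a b \<Longrightarrow> connected_in S b a"
proof -
  have "sym {(x, y). x \<in> S \<and> y \<in> S \<and> hdist x y \<le> 1}"
    by (auto simp: sym_def hdist_sym)
  then show "connected_in S a b \<Longrightarrow> connected_in S b a"
    unfolding connected_in_def by (auto dest: symD[OF sym_rtrancl])
qed

lemma connected_in_trans: "connected_in S a b \<Longrightarrow> connected_in S b c \<Longrightarrow> connected_in S a c"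
  unfolding connected_in_def by (meson rtrancl_trans)

locale switchable_set =
  fixes n t :: nat and r :: "nat \<Rightarrow> nat" and S :: "(nat \<Rightarrow> nat) set"
  assumes t_range: "t \<in> {1..n}" and S_gridN: "S \<subseteq> gridN n r" and switchable: "switchable t S"
begin

abbreviation "G \<equiv> gridN n r"

lemma connected_in_gridN: "connected_in S a b \<Longrightarrow> a \<in> G \<and> b \<in> G"
  using S_gridN by (auto simp: connected_in_def)

lemma switch_mem_step:
  assumes y: "y \<in> S" and z: "z \<in> S" "hdist y z \<le> 1" "z(i := v) \<in> S" and i: "i \<in> {1..t}"
  shows "y(i := v) \<in> S"
proof -
  obtain j where j: "\<And>k. k \<noteq> j \<Longrightarrow> y k = z k"
    using hdist_le_1E y z S_gridN by blast
  consider "\<forall>k. k \<noteq> i \<longrightarrow> y k = z k" | "j \<noteq> i" "y j \<noteq> z j" "z i \<noteq> v" | "j \<noteq> i" "z i = v"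
  proof (cases "j = i \<or> y j = z j")
    case True
    then have "\<forall>k. k \<noteq> i \<longrightarrow> y k = z k"
      using j by metis
    then show thesis by (rule that(1))
  qed (use that(2,3) in blast)
  then show ?thesis
  proof cases
    case 1
    then have "y(i := v) = z(i := v)" by auto
    then show ?thesis using z(3) by simp
  next
    case 2
    have "{k. y k \<noteq> (z(i := v)) k} = {i, j}"
      using j 2 by auto
    then have "hdist y (z(i := v)) = 2"
      using 2 by (simp add: hdist_def)
    then have "sw i y (z(i := v)) \<in> S"
      using switchable y z(3) i unfolding switchable_def by blast
    then show ?thesis by (metis sw_def fun_upd_same)
  next
    case 3
    then have "y(i := v) = y"
      using j by auto
    then show ?thesis using y by simp
  qed
qed

lemma switch_mem:
  assumes ab: "connected_in S a b" and i: "i \<in> {1..t}"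
  shows "a(i := b i) \<in> S"
proof -
  have "(a, b) \<in> {(x, y). x \<in> S \<and> y \<in> S \<and> hdist x y \<le> 1}\<^sup>*" "b \<in> S"
    using ab by (simp_all add: connected_in_def)
  then show ?thesis
  proof (induction rule: converse_rtrancl_induct)
    case base
    then show ?case by simp
  next
    case (step y z)
    then show ?case
      using switch_mem_step i by blast
  qed
qed

lemma switch_connected:
  assumes "connected_in S a b" "i \<in> {1..t}"
  shows "connected_in S a (a(i := b i))"
  using assms switch_mem[OF assms] hdist_upd_le
  by (intro connected_in_step) (auto simp: connected_in_def)

definition comp_code :: "(nat \<Rightarrow> nat) \<Rightarrow> nat list" where
  "comp_code a = Min (coords n ` {c. connected_in S a c})"

lemma comp_code_eq: "connected_in S a b \<Longrightarrow> comp_code a = comp_code b"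
proof -
  assume "connected_in S a b"
  then have "{c. connected_in S a c} = {c. connected_in S b c}"
    using connected_in_sym connected_in_trans by blast
  then show ?thesis by (simp add: comp_code_def)
qed

lemma comp_code_in_component:
  assumes "a \<in> S"
  obtains c where "connected_in S a c" "coords n c = comp_code a"
proof -
  have "{c. connected_in S a c} \<subseteq> G"
    using connected_in_gridN by auto
  then have "finite (coords n ` {c. connected_in S a c})"
    by (intro finite_imageI) (rule finite_subset[OF _ finite_gridN])
  moreover have "coords n ` {c. connected_in S a c} \<noteq> {}"
    using connected_in_refl[OF assms] by auto
  ultimately have "comp_code a \<in> coords n ` {c. connected_in S a c}"
    unfolding comp_code_def by (rule Min_in)
  then obtain c where "connected_in S a c" "comp_code a = coords n c"
    by auto
  then show ?thesis
    by (intro that) simp_all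
qed

lemma length_comp_code: "a \<in> S \<Longrightarrow> length (comp_code a) = n"
  by (elim comp_code_in_component) (metis coords_def diff_Suc_1 length_map length_upt)

lemma connected_if_comp_code_eq:
  assumes "a \<in> S" "b \<in> S" "comp_code a = comp_code b"
  shows "connected_in S a b"
proof -
  obtain c where ac: "connected_in S a c" "coords n c = comp_code a"
    using comp_code_in_component[OF assms(1)] .
  obtain d where bd: "connected_in S b d" "coords n d = comp_code b"
    using comp_code_in_component[OF assms(2)] .
  have "c = d"
    using ac bd assms(3) connected_in_gridN coords_inj by metis
  then show ?thesis
    using connected_in_trans[OF ac(1)] connected_in_sym[OF bd(1)] by simp
qed

section \<open>The monomial parametrisation\<close>

text \<open>The three kinds of target variables described above, kept apart by their first entry.\<close>

definition code_comp :: "(nat \<Rightarrow> nat) \<Rightarrow> nat list" where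
  "code_comp a = 0 # comp_code a @ map a [Suc t..<Suc n]"

definition code_coord :: "(nat \<Rightarrow> nat) \<Rightarrow> nat \<Rightarrow> nat list" where
  "code_coord a j = 1 # j # a j # comp_code a"

definition code_out :: "(nat \<Rightarrow> nat) \<Rightarrow> nat list" where
  "code_out a = 2 # coords n a"

lemma code_distinct [simp]:
  "code_comp a \<noteq> code_coord b j" "code_coord b j \<noteq> code_comp a"
  "code_comp a \<noteq> code_out c" "code_out c \<noteq> code_comp a"
  "code_coord b j \<noteq> code_out c" "code_out c \<noteq> code_coord b j"
  by (simp_all add: code_comp_def code_coord_def code_out_def)

lemma code_coord_eq_iff: "code_coord a j = code_coord b i \<longleftrightarrow> j = i \<and> a j = b i \<and> comp_code a = comp_code b"
  by (auto simp: code_coord_def)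

lemma code_out_eq_iff: "a \<in> G \<Longrightarrow> b \<in> G \<Longrightarrow> code_out a = code_out b \<longleftrightarrow> a = b"
  using coords_inj[of a n r b] by (auto simp: code_out_def)

lemma code_comp_eqD:
  assumes "a \<in> S" "b \<in> S" "code_comp a = code_comp b"
  shows "comp_code a = comp_code b" and "\<And>j. j \<notin> {1..t} \<Longrightarrow> a j = b j"
proof -
  have eq: "comp_code a @ map a [Suc t..<Suc n] = comp_code b @ map b [Suc t..<Suc n]"
    and len: "length (comp_code a) = length (comp_code b)"
    using assms by (simp_all add: code_comp_def length_comp_code)
  then show "comp_code a = comp_code b"
    by simp
  from eq len have tail: "map a [Suc t..<Suc n] = map b [Suc t..<Suc n]"
    by simp
  fix j assume j: "j \<notin> {1..t}"
  show "a j = b j"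
  proof (cases "j \<in> {1..n}")
    case True
    then show ?thesis
      using j tail by (auto simp: map_eq_conv simp del: upt_Suc)
  next
    case False
    then show ?thesis
      using assms(1,2) S_gridN gridN_outside by (metis subsetD)
  qed
qed

definition phi_var :: "(nat \<Rightarrow> nat) \<Rightarrow> nat list \<Rightarrow>\<^sub>0 nat" where
  "phi_var a = (if a \<in> S
     then Poly_Mapping.single (code_comp a) 1 + (\<Sum>j\<in>{1..t}. Poly_Mapping.single (code_coord a j) 1)
     else Poly_Mapping.single (code_out a) 1)"

text \<open>Only the exponents at grid points are read; all monomials below are supported on \<open>G\<close>.\<close>

definition phi_mon :: "((nat \<Rightarrow> nat) \<Rightarrow>\<^sub>0 nat) \<Rightarrow> nat list \<Rightarrow>\<^sub>0 nat" where
  "phi_mon m = (\<Sum>a\<in>G. Poly_Mapping.map ((*) (Poly_Mapping.lookup m a)) (phi_var a))"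

lemma lookup_phi_mon:
  "Poly_Mapping.lookup (phi_mon m) v =
     (\<Sum>a\<in>G. Poly_Mapping.lookup m a * Poly_Mapping.lookup (phi_var a) v)"
  by (simp add: phi_mon_def lookup_sum lookup_map_mult)

lemma phi_mon_add: "phi_mon (m + m') = phi_mon m + phi_mon m'"
  by (rule poly_mapping_eqI) (simp add: lookup_phi_mon lookup_add distrib_right sum.distrib)

lemma phi_mon_zero: "phi_mon 0 = 0"
  by (rule poly_mapping_eqI) (simp add: lookup_phi_mon)

lemma phi_mon_single:
  assumes "b \<in> G"
  shows "phi_mon (Poly_Mapping.single b 1) = phi_var b"
proof (rule poly_mapping_eqI)
  fix v
  have "Poly_Mapping.lookup (phi_mon (Poly_Mapping.single b 1)) v =
      (\<Sum>a\<in>G. if a = b then Poly_Mapping.lookup (phi_var a) v else 0)"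
    unfolding lookup_phi_mon by (intro sum.cong) (auto simp: lookup_single)
  then show "Poly_Mapping.lookup (phi_mon (Poly_Mapping.single b 1)) v =
      Poly_Mapping.lookup (phi_var b) v"
    using assms by (simp add: finite_gridN sum.delta')
qed

lemma lookup_phi_var_pos:
  "0 < Poly_Mapping.lookup (phi_var a) v \<longleftrightarrow>
     (if a \<in> S then v = code_comp a \<or> (\<exists>j\<in>{1..t}. v = code_coord a j) else v = code_out a)"
  by (auto simp: phi_var_def lookup_add lookup_sum lookup_single when_def sum_pos_iff_nat)

lemma lookup_phi_mon_pos_iff:
  "0 < Poly_Mapping.lookup (phi_mon m) v \<longleftrightarrow>
     (\<exists>a\<in>G. 0 < Poly_Mapping.lookup m a \<and> 0 < Poly_Mapping.lookup (phi_var a) v)"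
  by (simp add: lookup_phi_mon finite_gridN sum_pos_iff_nat)

lemma lookup_phi_mon_code_out:
  assumes "b \<in> G" "b \<notin> S"
  shows "Poly_Mapping.lookup (phi_mon m) (code_out b) = Poly_Mapping.lookup m b"
proof -
  have "Poly_Mapping.lookup (phi_var a) (code_out b) = (if a = b then 1 else 0)" if "a \<in> G" for a
    using assms that by (auto simp: phi_var_def lookup_add lookup_sum lookup_single when_def code_out_eq_iff)
  then have "Poly_Mapping.lookup (phi_mon m) (code_out b) =
      (\<Sum>a\<in>G. if a = b then Poly_Mapping.lookup m a else 0)"
    unfolding lookup_phi_mon by (intro sum.cong) auto
  then show ?thesis
    using assms(1) by (simp add: finite_gridN sum.delta')
qed

lemma coord_mateE:
  assumes "0 < Poly_Mapping.lookup (phi_mon m) (code_coord b i)"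
  obtains c where "c \<in> S" "0 < Poly_Mapping.lookup m c" "c i = b i" "comp_code c = comp_code b"
proof -
  obtain c where c: "c \<in> G" "0 < Poly_Mapping.lookup m c"
    "0 < Poly_Mapping.lookup (phi_var c) (code_coord b i)"
    using assms lookup_phi_mon_pos_iff by blast
  then have "c \<in> S" "c i = b i" "comp_code c = comp_code b"
    by (auto simp: lookup_phi_var_pos code_coord_eq_iff split: if_splits)
  then show thesis
    using that c(2) by blast
qed

lemma comp_mateE:
  assumes b: "b \<in> S" and pos: "0 < Poly_Mapping.lookup (phi_mon m) (code_comp b)"
  obtains a where "a \<in> S" "0 < Poly_Mapping.lookup m a" "comp_code a = comp_code b"
    "\<forall>j. j \<notin> {1..t} \<longrightarrow> a j = b j"
proof -
  obtain a where a: "a \<in> G" "0 < Poly_Mapping.lookup m a"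
    "0 < Poly_Mapping.lookup (phi_var a) (code_comp b)"
    using pos lookup_phi_mon_pos_iff by blast
  then have aS: "a \<in> S" and "code_comp a = code_comp b"
    by (auto simp: lookup_phi_var_pos split: if_splits)
  then have "comp_code a = comp_code b" "\<forall>j. j \<notin> {1..t} \<longrightarrow> a j = b j"
    using code_comp_eqD[OF aS b] by auto
  then show thesis
    using that aS a(2) by blast
qed

lemma phi_mon_eq_0_iff:
  assumes "Poly_Mapping.keys m \<subseteq> G"
  shows "phi_mon m = 0 \<longleftrightarrow> m = 0"
proof
  assume m: "phi_mon m = 0"
  have "Poly_Mapping.lookup m a = 0" for a
  proof (rule ccontr)
    let ?v = "if a \<in> S then code_comp a else code_out a"
    assume "Poly_Mapping.lookup m a \<noteq> 0"
    then have "a \<in> G" "0 < Poly_Mapping.lookup m a"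
      using assms by (auto simp: in_keys_iff)
    moreover have "0 < Poly_Mapping.lookup (phi_var a) ?v"
      by (simp add: lookup_phi_var_pos)
    ultimately have "0 < Poly_Mapping.lookup (phi_mon m) ?v"
      using lookup_phi_mon_pos_iff by blast
    then show False
      using m by simp
  qed
  then show "m = 0"
    by (simp add: poly_mapping_eqI)
qed (simp add: phi_mon_zero)

text \<open>Switching a coordinate \<open>i \<le> t\<close> between connected points keeps both in the component, so only
  the variables \<open>code_coord _ i\<close> are exchanged.\<close>

lemma phi_var_switch:
  assumes ac: "connected_in S a c" and i: "i \<in> {1..t}"
  shows "phi_var (a(i := c i)) + phi_var (c(i := a i)) = phi_var a + phi_var c"
proof -
  let ?a = "a(i := c i)" and ?c = "c(i := a i)"
  have ca: "connected_in S c a" using connected_in_sym[OF ac] .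
  have mem: "a \<in> S" "c \<in> S" "?a \<in> S" "?c \<in> S"
    using ac switch_mem[OF ac i] switch_mem[OF ca i] by (auto simp: connected_in_def)
  have comp: "comp_code ?a = comp_code a" "comp_code ?c = comp_code a" "comp_code c = comp_code a"
    using comp_code_eq[OF switch_connected[OF ac i]] comp_code_eq[OF switch_connected[OF ca i]]
      comp_code_eq[OF ac] by simp_all
  have "code_comp ?a = code_comp a" "code_comp ?c = code_comp c"
    using comp i by (simp_all add: code_comp_def)
  moreover have "Poly_Mapping.single (code_coord ?a j) 1 + Poly_Mapping.single (code_coord ?c j) 1
      = Poly_Mapping.single (code_coord a j) 1 + Poly_Mapping.single (code_coord c j) (1::nat)" for j
    using comp by (cases "j = i") (simp_all add: code_coord_def add.commute)
  then have "(\<Sum>j\<in>{1..t}. Poly_Mapping.single (code_coord ?a j) 1)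
      + (\<Sum>j\<in>{1..t}. Poly_Mapping.single (code_coord ?c j) (1::nat))
      = (\<Sum>j\<in>{1..t}. Poly_Mapping.single (code_coord a j) 1)
      + (\<Sum>j\<in>{1..t}. Poly_Mapping.single (code_coord c j) 1)"
    by (simp add: sum.distrib[symmetric])
  ultimately show ?thesis
    using mem by (simp add: phi_var_def ac_simps)
qed

lemma fbin_polyN:
  assumes "i \<in> {1..t}" "connected_in S a b"
  shows "(fbin i a b :: 'k::field mpoly) \<in> polyN n r"
proof -
  have "a \<in> G" "b \<in> G" "i \<in> {1..n}"
    using assms connected_in_gridN t_range by auto
  then show ?thesis
    unfolding fbin_def by (intro polyN_diff polyN_mult var_polyN sw_gridN)
qed

lemma fbin_gens_polyN:
  "{fbin i a b | i a b. i \<in> {1..t} \<and> connected_in S a b} \<subseteq> (polyN n r :: 'k::field mpoly set)"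
  using fbin_polyN by blast

lemma Itilde_ideal: "ideal (Itilde n r t S :: 'k::field mpoly set) (ringR n r)"
  unfolding Itilde_def by (rule genideal_ringR(1)[OF fbin_gens_polyN])

lemma fbin_in_Itilde:
  "i \<in> {1..t} \<Longrightarrow> connected_in S a b \<Longrightarrow> (fbin i a b :: 'k::field mpoly) \<in> Itilde n r t S"
  unfolding Itilde_def using genideal_ringR(2)[OF fbin_gens_polyN] by blast

lemma Itilde_subset:
  assumes "ideal I (ringR n r)" "\<And>i a b. i \<in> {1..t} \<Longrightarrow> connected_in S a b \<Longrightarrow> fbin i a b \<in> I"
  shows "(Itilde n r t S :: 'k::field mpoly set) \<subseteq> I"
  unfolding Itilde_def using assms by (intro genideal_ringR(3)[OF fbin_gens_polyN]) blast+

lemma binomial_trans: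
  assumes "monomial m - monomial m' \<in> (Itilde n r t S :: 'k::field mpoly set)"
    and "monomial m' - monomial m'' \<in> (Itilde n r t S :: 'k mpoly set)"
  shows "monomial m - monomial m'' \<in> (Itilde n r t S :: 'k mpoly set)"
  using ideal_add[OF Itilde_ideal assms] by simp

section \<open>Fibres of the parametrisation\<close>

lemma switch_in_fibre:
  assumes m: "Poly_Mapping.keys m \<subseteq> G"
    and a: "0 < Poly_Mapping.lookup m a" and c: "0 < Poly_Mapping.lookup m c" "a \<noteq> c"
    and ac: "connected_in S a c" and i: "i \<in> {1..t}"
  obtains m' where "Poly_Mapping.keys m' \<subseteq> G" "phi_mon m' = phi_mon m"
    "monomial m - monomial m' \<in> (Itilde n r t S :: 'k::field mpoly set)"
    "0 < Poly_Mapping.lookup m' (a(i := c i))"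
proof -
  let ?a = "a(i := c i)" and ?c = "c(i := a i)"
  define k where "k = m - Poly_Mapping.single a 1 - Poly_Mapping.single c 1"
  define m' where "m' = k + Poly_Mapping.single ?a 1 + Poly_Mapping.single ?c 1"
  have m_eq: "m = k + Poly_Mapping.single a 1 + Poly_Mapping.single c 1"
    unfolding k_def by (rule double_split_nat[OF a c])
  have k: "Poly_Mapping.keys k \<subseteq> G"
    unfolding k_def using m keys_diff_nat_subset by (meson order_trans)
  have grid: "a \<in> G" "c \<in> G" "?a \<in> G" "?c \<in> G"
    using connected_in_gridN[OF ac] switch_mem[OF ac i] switch_mem[OF connected_in_sym[OF ac] i]
      S_gridN by auto
  have "phi_mon m' = phi_mon k + (phi_var ?a + phi_var ?c)"
    by (simp only: m'_def phi_mon_add phi_mon_single grid add.assoc)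
  also have "\<dots> = phi_mon k + (phi_var a + phi_var c)"
    by (simp only: phi_var_switch[OF ac i])
  also have "\<dots> = phi_mon m"
    by (simp only: m_eq phi_mon_add phi_mon_single grid add.assoc)
  finally have "phi_mon m' = phi_mon m" .
  moreover have "Poly_Mapping.keys m' \<subseteq> G"
    using k grid by (simp add: m'_def keys_add_nat)
  moreover have "monomial m - monomial m' = monomial k * (fbin i a c :: 'k mpoly)"
    by (simp add: m'_def m_eq monomial_add var_eq_monomial fbin_def sw_def algebra_simps)
  then have "monomial m - monomial m' \<in> (Itilde n r t S :: 'k mpoly set)"
    using ideal_mult_left[OF Itilde_ideal monomial_polyN[OF k] fbin_in_Itilde[OF i ac]] by simp
  moreover have "0 < Poly_Mapping.lookup m' ?a"
    by (simp add: m'_def lookup_add)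
  ultimately show thesis
    using that by blast
qed

text \<open>Inside a fibre of \<open>phi_mon\<close>, a point of the component of \<open>b\<close> that agrees with \<open>b\<close> beyond \<open>t\<close>
  can be turned into \<open>b\<close> one coordinate at a time: the variable \<open>code_coord b i\<close> in the image
  provides a point with the right \<open>i\<close>-th coordinate to switch with.\<close>

lemma fibre_move_to:
  assumes "Poly_Mapping.keys m \<subseteq> G" "b \<in> S"
    and "\<forall>i\<in>{1..t}. 0 < Poly_Mapping.lookup (phi_mon m) (code_coord b i)"
    and "a \<in> S" "0 < Poly_Mapping.lookup m a" "comp_code a = comp_code b"
    and "\<forall>j. j \<notin> {1..t} \<longrightarrow> a j = b j"
  shows "\<exists>m'. Poly_Mapping.keys m' \<subseteq> G \<and> phi_mon m' = phi_mon m \<and>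
    monomial m - monomial m' \<in> (Itilde n r t S :: 'k::field mpoly set) \<and>
    0 < Poly_Mapping.lookup m' b"
  using assms
proof (induction "card {j. a j \<noteq> b j}" arbitrary: m a rule: less_induct)
  case less
  show ?case
  proof (cases "a = b")
    case True
    then show ?thesis
      using less.prems ideal_zero[OF Itilde_ideal] by (intro exI[of _ m]) simp
  next
    case False
    then obtain i where "a i \<noteq> b i" by blast
    then have i: "i \<in> {1..t}" "a i \<noteq> b i"
      using less.prems(7) by blast+
    then obtain c where c: "c \<in> S" "0 < Poly_Mapping.lookup m c" "c i = b i"
        "comp_code c = comp_code b"
      using less.prems(3) coord_mateE by blast
    then have ac: "connected_in S a c"
      using connected_if_comp_code_eq less.prems(4,6) by simp
    have "a \<noteq> c"
      using i(2) c(3) by auto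
    obtain m1 where m1: "Poly_Mapping.keys m1 \<subseteq> G" "phi_mon m1 = phi_mon m"
        "monomial m - monomial m1 \<in> (Itilde n r t S :: 'k mpoly set)"
        "0 < Poly_Mapping.lookup m1 (a(i := c i))"
      by (rule switch_in_fibre[OF less.prems(1,5) c(2) \<open>a \<noteq> c\<close> ac i(1)])
    let ?a = "a(i := b i)"
    have "{j. ?a j \<noteq> b j} \<subset> {j. a j \<noteq> b j}"
      using i(2) by auto
    moreover have "finite {j. a j \<noteq> b j}"
      using less.prems(7) by (blast intro: finite_subset[of _ "{1..t}"])
    ultimately have card_less: "card {j. ?a j \<noteq> b j} < card {j. a j \<noteq> b j}"
      by (rule psubset_card_mono[rotated])
    have "?a \<in> S" "comp_code ?a = comp_code b" "\<forall>j. j \<notin> {1..t} \<longrightarrow> ?a j = b j"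
      using switch_mem[OF ac i(1)] comp_code_eq[OF switch_connected[OF ac i(1)]] c(3)
        less.prems(6,7) i(1) by auto
    then have "\<exists>m'. Poly_Mapping.keys m' \<subseteq> G \<and> phi_mon m' = phi_mon m1 \<and>
        monomial m1 - monomial m' \<in> (Itilde n r t S :: 'k mpoly set) \<and> 0 < Poly_Mapping.lookup m' b"
      using less.prems(2,3) m1 c(3) by (intro less.hyps[OF card_less]) (simp_all del: fun_upd_apply)
    then show ?thesis
      using m1(2,3) binomial_trans by metis
  qed
qed

lemma fibre_mate_containing:
  assumes m: "Poly_Mapping.keys m \<subseteq> G" and m': "Poly_Mapping.keys m' \<subseteq> G"
    and eq: "phi_mon m = phi_mon m'" and b: "0 < Poly_Mapping.lookup m' b"
  shows "\<exists>m2. Poly_Mapping.keys m2 \<subseteq> G \<and> phi_mon m2 = phi_mon m \<and>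
    monomial m - monomial m2 \<in> (Itilde n r t S :: 'k::field mpoly set) \<and>
    0 < Poly_Mapping.lookup m2 b"
proof -
  have bG: "b \<in> G"
    using m' b by (auto simp: in_keys_iff)
  have image: "0 < Poly_Mapping.lookup (phi_mon m) v" if "0 < Poly_Mapping.lookup (phi_var b) v" for v
    using bG b that unfolding eq lookup_phi_mon_pos_iff by blast
  show ?thesis
  proof (cases "b \<in> S")
    case False
    then have "Poly_Mapping.lookup m b = Poly_Mapping.lookup m' b"
      using lookup_phi_mon_code_out[OF bG False] eq by metis
    then show ?thesis
      using m b ideal_zero[OF Itilde_ideal] by (intro exI[of _ m]) simp
  next
    case True
    then obtain a where a: "a \<in> S" "0 < Poly_Mapping.lookup m a" "comp_code a = comp_code b"
        "\<forall>j. j \<notin> {1..t} \<longrightarrow> a j = b j"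
      using image[of "code_comp b"] comp_mateE by (auto simp: lookup_phi_var_pos)
    moreover have "\<forall>i\<in>{1..t}. 0 < Poly_Mapping.lookup (phi_mon m) (code_coord b i)"
      using image True by (auto simp: lookup_phi_var_pos)
    ultimately show ?thesis
      using fibre_move_to[OF m True] by blast
  qed
qed

lemma binomial_add_var:
  assumes "monomial k - monomial k' \<in> (Itilde n r t S :: 'k::field mpoly set)" "b \<in> G"
  shows "monomial (k + Poly_Mapping.single b 1) - monomial (k' + Poly_Mapping.single b 1)
    \<in> (Itilde n r t S :: 'k mpoly set)"
proof -
  have "var b * (monomial k - monomial k') \<in> (Itilde n r t S :: 'k mpoly set)"
    by (rule ideal_mult_left[OF Itilde_ideal var_polyN[OF assms(2)] assms(1)])
  then show ?thesis
    by (simp add: monomial_add var_eq_monomial algebra_simps)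
qed

lemma binomial_in_Itilde:
  assumes "Poly_Mapping.keys m \<subseteq> G" "Poly_Mapping.keys m' \<subseteq> G" "phi_mon m = phi_mon m'"
  shows "monomial m - monomial m' \<in> (Itilde n r t S :: 'k::field mpoly set)"
  using assms
proof (induction "\<Sum>a\<in>G. Poly_Mapping.lookup m' a" arbitrary: m m' rule: less_induct)
  case less
  show ?case
  proof (cases "m' = 0")
    case True
    then have "m = 0"
      using phi_mon_eq_0_iff[OF less.prems(1)] phi_mon_eq_0_iff[OF less.prems(2)] less.prems(3)
      by simp
    then show ?thesis
      using True ideal_zero[OF Itilde_ideal] by simp
  next
    case False
    then obtain b where "b \<in> Poly_Mapping.keys m'"
      by fastforce
    then have b: "0 < Poly_Mapping.lookup m' b"
      by (simp add: in_keys_iff)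
    then have bG: "b \<in> G"
      using less.prems(2) by (auto simp: in_keys_iff)
    obtain m2 where m2: "Poly_Mapping.keys m2 \<subseteq> G" "phi_mon m2 = phi_mon m"
        "monomial m - monomial m2 \<in> (Itilde n r t S :: 'k mpoly set)" "0 < Poly_Mapping.lookup m2 b"
      using fibre_mate_containing[OF less.prems b] by blast
    define k where "k = m2 - Poly_Mapping.single b 1"
    define k' where "k' = m' - Poly_Mapping.single b 1"
    have m2_eq: "m2 = k + Poly_Mapping.single b 1"
      unfolding k_def by (rule single_split_nat[OF m2(4)])
    have m'_eq: "m' = k' + Poly_Mapping.single b 1"
      unfolding k'_def by (rule single_split_nat[OF b])
    have "phi_mon k + phi_var b = phi_mon k' + phi_var b"
      using m2(2) less.prems(3) bG by (simp add: m2_eq m'_eq phi_mon_add phi_mon_single)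
    then have phi_eq: "phi_mon k = phi_mon k'"
      by simp
    have keys: "Poly_Mapping.keys k \<subseteq> G" "Poly_Mapping.keys k' \<subseteq> G"
      unfolding k_def k'_def
      using order.trans[OF keys_diff_nat_subset m2(1)] order.trans[OF keys_diff_nat_subset less.prems(2)]
      by simp_all
    have "(\<Sum>a\<in>G. Poly_Mapping.lookup k' a) < (\<Sum>a\<in>G. Poly_Mapping.lookup m' a)"
      using bG by (simp add: m'_eq lookup_add sum.distrib lookup_single when_def finite_gridN)
    then have "monomial k - monomial k' \<in> (Itilde n r t S :: 'k mpoly set)"
      by (rule less.hyps[OF _ keys phi_eq])
    then have "monomial m2 - monomial m' \<in> (Itilde n r t S :: 'k mpoly set)"
      unfolding m2_eq m'_eq by (rule binomial_add_var[OF _ bG])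
    then show ?thesis
      by (rule binomial_trans[OF m2(3)])
  qed
qed

section \<open>The kernels\<close>

lemma fbin_eq_monomial:
  "fbin i a b = (monomial (Poly_Mapping.single a 1 + Poly_Mapping.single b 1)
    - monomial (Poly_Mapping.single (sw i a b) 1 + Poly_Mapping.single (sw i b a) 1) :: 'k::field mpoly)"
  by (simp add: fbin_def monomial_add var_eq_monomial)

lemma Itilde_subset_kernel:
  fixes \<chi> :: "((nat \<Rightarrow> nat) \<Rightarrow>\<^sub>0 nat) \<Rightarrow> 'k::field"
  assumes mult: "\<And>m m'. \<chi> (m + m') = \<chi> m * \<chi> m'"
    and trivial: "\<And>m. Poly_Mapping.keys m \<subseteq> S \<Longrightarrow> \<chi> m = 1"
  shows "Itilde n r t S \<subseteq> {p \<in> polyN n r. monom_map phi_mon \<chi> p = 0}"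
proof (rule Itilde_subset)
  show "ideal {p \<in> polyN n r. monom_map phi_mon \<chi> p = 0} (ringR n r)"
    using monom_map_kernel_primeideal[OF phi_mon_add mult] trivial[of 0]
    by (simp add: primeideal.axioms(1))
  fix i a b assume i: "i \<in> {1..t}" and ab: "connected_in S a b"
  let ?s = "Poly_Mapping.single (sw i a b) 1 + Poly_Mapping.single (sw i b a) (1::nat)"
  have mem: "a \<in> S" "b \<in> S" "sw i a b \<in> S" "sw i b a \<in> S"
    using ab switch_mem[OF ab i] switch_mem[OF connected_in_sym[OF ab] i]
    by (auto simp: connected_in_def sw_def)
  then have grid: "a \<in> G" "b \<in> G" "sw i a b \<in> G" "sw i b a \<in> G"
    using S_gridN by auto
  have "phi_mon (Poly_Mapping.single a 1 + Poly_Mapping.single b 1) = phi_mon ?s"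
    using phi_var_switch[OF ab i] grid by (simp only: phi_mon_add phi_mon_single sw_def)
  moreover have "\<chi> (Poly_Mapping.single a 1 + Poly_Mapping.single b 1) = \<chi> ?s"
    using mem by (simp add: trivial keys_add_nat)
  ultimately have "monom_map phi_mon \<chi> (fbin i a b) = 0"
    by (simp add: fbin_eq_monomial monom_map_diff monom_map_monomial)
  then show "fbin i a b \<in> {p \<in> polyN n r. monom_map phi_mon \<chi> p = 0}"
    using fbin_polyN[OF i ab] by simp
qed

lemma kernel_subset_Itilde:
  "{p \<in> polyN n r. monom_map phi_mon (\<lambda>_. 1) p = 0} \<subseteq> (Itilde n r t S :: 'k::field mpoly set)"
  by (rule monom_map_kernel_subset[OF Itilde_ideal]) (simp_all add: binomial_in_Itilde)

lemma Itilde_eq_kernel: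
  "Itilde n r t S = {p \<in> polyN n r. monom_map phi_mon (\<lambda>_. 1) p = (0 :: _ \<Rightarrow>\<^sub>0 'k::field)}"
proof (rule subset_antisym)
  show "Itilde n r t S \<subseteq> {p \<in> polyN n r. monom_map phi_mon (\<lambda>_. 1) p = (0 :: _ \<Rightarrow>\<^sub>0 'k)}"
    by (rule Itilde_subset_kernel) simp_all
qed (rule kernel_subset_Itilde)

lemma var_gens_polyN: "{var a | a. a \<in> G \<and> a \<notin> S} \<subseteq> (polyN n r :: 'k::field mpoly set)"
  using var_polyN by blast

lemma VarS_ideal: "ideal (VarS n r S :: 'k::field mpoly set) (ringR n r)"
  unfolding VarS_def by (rule genideal_ringR(1)[OF var_gens_polyN])

lemma var_in_VarS: "a \<in> G \<Longrightarrow> a \<notin> S \<Longrightarrow> (var a :: 'k::field mpoly) \<in> VarS n r S"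
  unfolding VarS_def using genideal_ringR(2)[OF var_gens_polyN] by blast

lemma PS_ideal: "ideal (PS n r t S :: 'k::field mpoly set) (ringR n r)"
proof -
  interpret cring "ringR n r :: 'k mpoly ring" by (rule cring_ringR)
  show ?thesis
    unfolding PS_def by (rule add_ideals[OF VarS_ideal Itilde_ideal])
qed

lemma PS_eq_set_add: "PS n r t S = {x + y | x y. x \<in> VarS n r S \<and> y \<in> (Itilde n r t S :: 'k::field mpoly set)}"
  unfolding PS_def set_add_def' by (auto simp: ringR_simps)

lemma VarS_subset_PS: "VarS n r S \<subseteq> (PS n r t S :: 'k::field mpoly set)"
  unfolding PS_eq_set_add using ideal_zero[OF Itilde_ideal] by force

lemma Itilde_subset_PS: "Itilde n r t S \<subseteq> (PS n r t S :: 'k::field mpoly set)"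
  unfolding PS_eq_set_add using ideal_zero[OF VarS_ideal] by force

lemma avoiding_kernel_ideal:
  "ideal {p \<in> polyN n r. monom_map phi_mon (avoiding (G - S)) p = (0 :: _ \<Rightarrow>\<^sub>0 'k::field)} (ringR n r)"
  by (rule primeideal.axioms(1), rule monom_map_kernel_primeideal[OF phi_mon_add avoiding_add]) simp

lemma PS_subset_kernel:
  "PS n r t S \<subseteq> {p \<in> polyN n r. monom_map phi_mon (avoiding (G - S)) p = (0 :: _ \<Rightarrow>\<^sub>0 'k::field)}"
  (is "_ \<subseteq> ?K")
proof -
  have "var a \<in> ?K" if a: "a \<in> G" "a \<notin> S" for a
  proof -
    have "avoiding (G - S) (Poly_Mapping.single a 1) = (0 :: 'k)"
      unfolding avoiding_def using a by (metis DiffI lookup_single_eq one_neq_zero)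
    then show ?thesis
      using var_polyN[OF a(1)] by (simp add: var_eq_monomial monom_map_monomial)
  qed
  then have "VarS n r S \<subseteq> ?K"
    unfolding VarS_def by (intro genideal_ringR(3)[OF var_gens_polyN avoiding_kernel_ideal]) blast
  moreover have "Itilde n r t S \<subseteq> ?K"
  proof (rule Itilde_subset_kernel[OF avoiding_add])
    fix m :: "(nat \<Rightarrow> nat) \<Rightarrow>\<^sub>0 nat"
    assume "Poly_Mapping.keys m \<subseteq> S"
    then show "avoiding (G - S) m = 1"
      unfolding avoiding_def by (auto simp flip: not_in_keys_iff_lookup_eq_zero)
  qed
  ultimately show ?thesis
    unfolding PS_eq_set_add using ideal_add[OF avoiding_kernel_ideal] by (auto simp only: subset_iff)
qed

lemma monomial_in_VarS:
  assumes m: "Poly_Mapping.keys m \<subseteq> G" and a: "a \<in> G" "a \<notin> S" "0 < Poly_Mapping.lookup m a"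
  shows "(monomial m :: 'k::field mpoly) \<in> VarS n r S"
proof -
  have "monomial m = monomial (m - Poly_Mapping.single a 1) * (var a :: 'k mpoly)"
    by (subst single_split_nat[OF a(3)]) (simp add: monomial_add var_eq_monomial)
  moreover have "monomial (m - Poly_Mapping.single a 1) \<in> (polyN n r :: 'k mpoly set)"
    using order.trans[OF keys_diff_nat_subset m] by (rule monomial_polyN)
  ultimately show ?thesis
    using ideal_mult_left[OF VarS_ideal _ var_in_VarS[OF a(1,2)]] by simp
qed

lemma kernel_subset_PS:
  "{p \<in> polyN n r. monom_map phi_mon (avoiding (G - S)) p = 0} \<subseteq> (PS n r t S :: 'k::field mpoly set)"
proof (rule monom_map_kernel_subset[OF PS_ideal avoiding_0_or_1])
  fix m :: "(nat \<Rightarrow> nat) \<Rightarrow>\<^sub>0 nat"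
  assume "Poly_Mapping.keys m \<subseteq> G" "avoiding (G - S) m = (0 :: 'k)"
  moreover from this obtain a where "a \<in> G" "a \<notin> S" "0 < Poly_Mapping.lookup m a"
    unfolding avoiding_def by (metis DiffE neq0_conv one_neq_zero)
  ultimately show "monomial m \<in> (PS n r t S :: 'k mpoly set)"
    using monomial_in_VarS VarS_subset_PS by blast
next
  fix m m' :: "(nat \<Rightarrow> nat) \<Rightarrow>\<^sub>0 nat"
  assume "Poly_Mapping.keys m \<subseteq> G" "Poly_Mapping.keys m' \<subseteq> G" "phi_mon m = phi_mon m'"
  then show "monomial m - monomial m' \<in> (PS n r t S :: 'k mpoly set)"
    using binomial_in_Itilde Itilde_subset_PS by (meson subsetD)
qed

lemma PS_eq_kernel:
  "PS n r t S = {p \<in> polyN n r. monom_map phi_mon (avoiding (G - S)) p = (0 :: _ \<Rightarrow>\<^sub>0 'k::field)}"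
  using PS_subset_kernel kernel_subset_PS by (rule subset_antisym)

end

theorem theorem4p5:
  fixes n t :: nat and r :: "nat \<Rightarrow> nat" and S :: "(nat \<Rightarrow> nat) set"
  assumes "n \<ge> 1" and "\<forall>i\<in>{1..n}. r i \<ge> 1"
    and "t \<in> {1..n}"
    and "S \<subseteq> gridN n r" and "switchable t S"
  shows "primeideal (Itilde n r t S :: ('k::field) mpoly set) (ringR n r) \<and>
         primeideal (PS n r t S :: ('k::field) mpoly set) (ringR n r)"
proof -
  interpret switchable_set n t r S
    using assms(3-5) by unfold_locales
  have "primeideal {p \<in> polyN n r. monom_map phi_mon \<chi> p = 0} (ringR n r)"
    if "\<chi> = (\<lambda>_. 1) \<or> \<chi> = avoiding (G - S)" for \<chi> :: "((nat \<Rightarrow> nat) \<Rightarrow>\<^sub>0 nat) \<Rightarrow> 'k"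
    using that by (intro monom_map_kernel_primeideal phi_mon_add) (auto simp: avoiding_add)
  then show ?thesis
    unfolding Itilde_eq_kernel PS_eq_kernel by blast
qed

end
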